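(* $\phi(x_0)=-1$.
   Context: Variables $x_i$, $i\in\mathbb{Z}$, commute. A signed graph is a finite graph (loops and multiple edges allowed) with $\mathrm{sgn}:E\to\{+,-\}$; a coloring $\kappa:V\to\mathbb{Z}$ is proper if $\kappa(u)\ne\mathrm{sgn}(e)\kappa(v)$ for every edge $e$ with endpoints $u,v$. An orientation assigns to each half-edge (a loop has two) an arrow toward or away from the vertex, such that on a positive edge exactly one of the two arrows points toward its vertex and on a negative edge both point toward or both point away. A cycle is a closed walk in which, considering only the edges of the walk, every vertex of the walk has at least one arrow pointing into it and one pointing out of it; an orientation is acyclic if it has no cycle; a sink is a vertex all of whose incident arrows point toward it (an isolated vertex is a sink). A signed poset is an acyclic orientation $P$ of a signed graph. A proper coloring $\kappa$ preserves $P$ if for every edge $e$ and each endpoint $v$ of $e$, with $u$ the other endpoint ($u=v$ for a loop), the arrow of $P$ at the incidence of $e$ with $v$ points toward $v$ iff $\kappa(v)>\mathrm{sgn}(e)\kappa(u)$. $Y_P=\sum_\kappa\prod_v x_{\kappa(v)}$ over proper colorings preserving $P$; $\mathbb{Y}$ is the $\mathbb{Q}$-span of all $Y_P$ (it is closed under products and contains $x_0$). $\phi:\mathbb{Y}\to\mathbb{Q}[t]$ is the (unique) $\mathbb{Q}$-linear map with $\phi(Y_P)=t^{\mathrm{sink}(P)}$, $\mathrm{sink}(P)$ the number of sinks of $P$ (its existence is established in the paper). *)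

theory Defs
  imports Main "HOL-Library.Multiset" "HOL-Computational_Algebra.Polynomial"
begin

text \<open>A signed graph with an assignment of arrows to half-edges.  Components:
  V (vertex set), E (edge set), ends e = (u,v) the two endpoints of e
  (u = v for a loop), sg e = True iff e is positive, and
  arr e b = True iff the arrow on the half-edge of e at side b points toward
  its vertex (side False is at fst (ends e), side True at snd (ends e)).\<close>

type_synonym sgo =
  "nat set \<times> nat set \<times> (nat \<Rightarrow> nat \<times> nat) \<times> (nat \<Rightarrow> bool) \<times> (nat \<Rightarrow> bool \<Rightarrow> bool)"

definition sg_V :: "sgo \<Rightarrow> nat set" where "sg_V P = fst P"
definition sg_E :: "sgo \<Rightarrow> nat set" where "sg_E P = fst (snd P)"
definition sg_ends :: "sgo \<Rightarrow> nat \<Rightarrow> nat \<times> nat" where "sg_ends P = fst (snd (snd P))"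
definition sg_pos :: "sgo \<Rightarrow> nat \<Rightarrow> bool" where "sg_pos P = fst (snd (snd (snd P)))"
definition sg_arr :: "sgo \<Rightarrow> nat \<Rightarrow> bool \<Rightarrow> bool" where "sg_arr P = snd (snd (snd (snd P)))"

definition endpt :: "sgo \<Rightarrow> nat \<Rightarrow> bool \<Rightarrow> nat" where
  "endpt P e b = (if b then snd (sg_ends P e) else fst (sg_ends P e))"

definition sign_mult :: "sgo \<Rightarrow> nat \<Rightarrow> int \<Rightarrow> int" where
  "sign_mult P e k = (if sg_pos P e then k else - k)"

definition oriented_signed_graph :: "sgo \<Rightarrow> bool" where
  "oriented_signed_graph P \<longleftrightarrow>
     finite (sg_V P) \<and> finite (sg_E P) \<and>
     (\<forall>e\<in>sg_E P. endpt P e False \<in> sg_V P \<and> endpt P e True \<in> sg_V P) \<and>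
     (\<forall>e\<in>sg_E P. if sg_pos P e then sg_arr P e False \<noteq> sg_arr P e True
                                else sg_arr P e False = sg_arr P e True)"

definition closed_walk :: "sgo \<Rightarrow> nat list \<Rightarrow> nat list \<Rightarrow> bool" where
  "closed_walk P vs es \<longleftrightarrow> es \<noteq> [] \<and> length vs = length es \<and>
     (\<forall>i<length es. es!i \<in> sg_E P \<and>
        {endpt P (es!i) False, endpt P (es!i) True} = {vs!i, vs!((i+1) mod length es)})"

definition is_cycle :: "sgo \<Rightarrow> nat list \<Rightarrow> nat list \<Rightarrow> bool" where
  "is_cycle P vs es \<longleftrightarrow> closed_walk P vs es \<and>
     (\<forall>v\<in>set vs.
        (\<exists>e\<in>set es. \<exists>b. endpt P e b = v \<and> sg_arr P e b) \<and>
        (\<exists>e\<in>set es. \<exists>b. endpt P e b = v \<and> \<not> sg_arr P e b))"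

definition signed_poset :: "sgo \<Rightarrow> bool" where
  "signed_poset P \<longleftrightarrow> oriented_signed_graph P \<and> \<not> (\<exists>vs es. is_cycle P vs es)"

definition is_sink :: "sgo \<Rightarrow> nat \<Rightarrow> bool" where
  "is_sink P v \<longleftrightarrow> (\<forall>e\<in>sg_E P. \<forall>b. endpt P e b = v \<longrightarrow> sg_arr P e b)"

definition num_sinks :: "sgo \<Rightarrow> nat" where
  "num_sinks P = card {v \<in> sg_V P. is_sink P v}"

definition proper_col :: "sgo \<Rightarrow> (nat \<Rightarrow> int) \<Rightarrow> bool" where
  "proper_col P \<kappa> \<longleftrightarrow>
     (\<forall>e\<in>sg_E P. \<kappa> (endpt P e False) \<noteq> sign_mult P e (\<kappa> (endpt P e True)))"

definition preserves :: "sgo \<Rightarrow> (nat \<Rightarrow> int) \<Rightarrow> bool" where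
  "preserves P \<kappa> \<longleftrightarrow>
     (\<forall>e\<in>sg_E P. \<forall>b. sg_arr P e b \<longleftrightarrow>
         \<kappa> (endpt P e b) > sign_mult P e (\<kappa> (endpt P e (\<not> b))))"

text \<open>Y_P as a formal series in commuting variables x_i (i in Z): the coefficient of the
  monomial prod_{i} x_i^(count m i), for m an int multiset.  Colorings are functions
  V -> Z, represented as extensional functions (value 0 off V).\<close>
definition Ycoeff :: "sgo \<Rightarrow> int multiset \<Rightarrow> rat" where
  "Ycoeff P m = of_nat (card {\<kappa>. (\<forall>v. v \<notin> sg_V P \<longrightarrow> \<kappa> v = 0) \<and> proper_col P \<kappa> \<and>
        preserves P \<kappa> \<and> image_mset \<kappa> (mset_set (sg_V P)) = m})"

definition x0_coeff :: "int multiset \<Rightarrow> rat" where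
  "x0_coeff m = (if m = {#0#} then 1 else 0)"

end

theory Submission
  imports Defs
begin

(* Let chrom P (k+1) count the colorings of a signed poset P on n vertices with values in
   {-k..k}. In such a coloring every vertex of color k is a sink and every vertex of color -k
   is a source; deleting them gives the recursion
     chrom P (k+1) = sum over disjoint sets A of sinks and B of sources of chrom (P - A - B) k,
   which also holds at k = 0 with chrom P 0 = (-1)^n, since a signed poset with an edge has a
   vertex that is a sink but not a source or vice versa (otherwise one can walk forever,
   entering and leaving each vertex, and close a cycle). By induction, chrom P is a
   polynomial of degree at most n. Weighting each coloring by s^(number of vertices of color k)
   gives, in the same way, polynomials whose values at k >= 1 are specialisations of Y_P and
   whose value at 0 is (-1)^n (1-s)^sink(P). So if a combination of the Y_P equals x_0, the
   corresponding combination of these polynomials, for each n, is constant for k >= 1 and hence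
   everywhere; at 0 this gives sum c_P t^sink(P) = -1 with t = 1 - s. *)

lemma eventually_periodic_funpow:
  assumes "finite S" "f ` S \<subseteq> S" "x \<in> S"
  obtains i L where "L > 0" "(f ^^ (i + L)) x = (f ^^ i) x"
proof -
  have in_S: "(f ^^ k) x \<in> S" for k
    by (induction k) (use assms in auto)
  have "card ((\<lambda>k. (f ^^ k) x) ` {..card S}) \<le> card S"
    using in_S assms(1) by (intro card_mono) auto
  then have "\<not> inj_on (\<lambda>k. (f ^^ k) x) {..card S}"
    by (intro pigeonhole) simp
  then obtain i j where "i < j" "(f ^^ i) x = (f ^^ j) x"
    unfolding inj_on_def by (metis linorder_neqE_nat)
  then show thesis
    by (intro that[of "j - i" i]) simp_all
qed

lemma sum_Pow_power_card:
  fixes y :: "'a :: comm_semiring_1"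
  assumes "finite X"
  shows "(\<Sum>A\<in>Pow X. y ^ card A) = (1 + y) ^ card X"
  using prod_add[OF assms, of "\<lambda>_. y" "\<lambda>_. 1"] by (simp add: add.commute)

lemma sum_disjoint_pairs_alternating:
  assumes S: "finite S" and T: "finite T"
  shows "(\<Sum>(A, B)\<in>Sigma (Pow S) (\<lambda>A. Pow (T - A)). (- 1) ^ card A * (- 1) ^ card B :: 'a :: comm_ring_1)
         = (if S = T then (- 1) ^ card S else 0)"
proof -
  have "(\<Sum>(A, B)\<in>Sigma (Pow S) (\<lambda>A. Pow (T - A)). (- 1) ^ card A * (- 1) ^ card B :: 'a) =
      (\<Sum>A\<in>Pow S. (- 1) ^ card A * (\<Sum>B\<in>Pow (T - A). (- 1) ^ card B))"
    using S T by (simp add: sum.Sigma[symmetric] sum_distrib_left)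
  also have "\<dots> = (\<Sum>A\<in>Pow S. if T \<subseteq> A then (- 1) ^ card A else 0)"
    using T by (intro sum.cong refl) (simp add: sum_Pow_power_card power_0_left)
  also have "\<dots> = (\<Sum>A | A \<subseteq> S \<and> T \<subseteq> A. (- 1) ^ card A)"
    using S by (simp add: sum.inter_filter[symmetric] Pow_def conj_commute)
  also have "\<dots> = (if S = T then (- 1) ^ card S else 0)"
  proof -
    consider "\<not> T \<subseteq> S" | "T = S" | "T \<subset> S" by blast
    then show ?thesis
    proof cases
      case 3
      then show ?thesis
        using S by (simp add: sum_alternating_cancels card_subsupersets_even_odd)
    next
      case 2
      then have "{A. A \<subseteq> S \<and> T \<subseteq> A} = {S}" by auto
      then show ?thesis using 2 by simp
    qed (auto intro: sum.neutral)
  qed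
  finally show ?thesis .
qed

definition fwd_diff :: "(nat \<Rightarrow> 'a :: ab_group_add) \<Rightarrow> nat \<Rightarrow> 'a" where
  "fwd_diff g j = g (Suc j) - g j"

lemma funpow_fwd_diff_sum:
  fixes c :: "'i \<Rightarrow> 'a :: ring"
  shows "(fwd_diff ^^ k) (\<lambda>j. \<Sum>i\<in>S. c i * f i j) = (\<lambda>j. \<Sum>i\<in>S. c i * (fwd_diff ^^ k) (f i) j)"
  by (induction k) (simp_all add: fwd_diff_def sum_subtractf right_diff_distrib)

lemma funpow_fwd_diff_zero: "(fwd_diff ^^ k) (\<lambda>_. 0) = (\<lambda>_. 0)"
  by (induction k) (simp_all add: fwd_diff_def)

lemma funpow_fwd_diff_vanishes_mono:
  assumes "(fwd_diff ^^ m) g = (\<lambda>_. 0)" "m \<le> n"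
  shows "(fwd_diff ^^ n) g = (\<lambda>_. 0)"
proof -
  have "(fwd_diff ^^ n) g = (fwd_diff ^^ (n - m)) ((fwd_diff ^^ m) g)"
    using assms(2) by (metis funpow_add le_add_diff_inverse2 comp_apply)
  then show ?thesis
    using assms(1) by (simp add: funpow_fwd_diff_zero)
qed

lemma funpow_fwd_diff_vanishes_const:
  assumes "(fwd_diff ^^ k) g = (\<lambda>_. 0)" and "\<forall>j. g (Suc j) = c"
  shows "g 0 = c"
  using assms
proof (induction k arbitrary: g c)
  case 0
  then show ?case by simp
next
  case (Suc k)
  have "(fwd_diff ^^ k) (fwd_diff g) = (\<lambda>_. 0)"
    using Suc.prems(1) by (simp add: funpow_Suc_right del: funpow.simps)
  moreover have "\<forall>j. fwd_diff g (Suc j) = 0"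
    using Suc.prems(2) by (simp add: fwd_diff_def)
  ultimately have "fwd_diff g 0 = 0"
    by (rule Suc.IH)
  then show ?case
    using Suc.prems(2) by (simp add: fwd_diff_def)
qed

section \<open>Sinks, sources and cycles\<close>

lemma endpt_in_sg_V:
  "oriented_signed_graph P \<Longrightarrow> e \<in> sg_E P \<Longrightarrow> endpt P e b \<in> sg_V P"
  unfolding oriented_signed_graph_def by (cases b) auto

lemma finite_sg_V: "oriented_signed_graph P \<Longrightarrow> finite (sg_V P)"
  by (simp add: oriented_signed_graph_def)

lemma sg_arr_other_side:
  assumes "oriented_signed_graph P" "e \<in> sg_E P"
  shows "sg_arr P e (\<not> b) = (if sg_pos P e then \<not> sg_arr P e b else sg_arr P e b)"
  using assms unfolding oriented_signed_graph_def by (cases b) auto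

definition is_source :: "sgo \<Rightarrow> nat \<Rightarrow> bool" where
  "is_source P v \<longleftrightarrow> (\<forall>e\<in>sg_E P. \<forall>b. endpt P e b = v \<longrightarrow> \<not> sg_arr P e b)"

definition sinks :: "sgo \<Rightarrow> nat set" where
  "sinks P = {v \<in> sg_V P. is_sink P v}"

definition sources :: "sgo \<Rightarrow> nat set" where
  "sources P = {v \<in> sg_V P. is_source P v}"

lemma finite_sinks: "oriented_signed_graph P \<Longrightarrow> finite (sinks P)"
  and finite_sources: "oriented_signed_graph P \<Longrightarrow> finite (sources P)"
  by (simp_all add: sinks_def sources_def finite_sg_V)

definition delete_vertices :: "sgo \<Rightarrow> nat set \<Rightarrow> sgo" where
  "delete_vertices P X = (sg_V P - X, {e \<in> sg_E P. endpt P e False \<notin> X \<and> endpt P e True \<notin> X},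
     sg_ends P, sg_pos P, sg_arr P)"

lemma delete_vertices_components [simp]:
  "sg_V (delete_vertices P X) = sg_V P - X"
  "sg_E (delete_vertices P X) = {e \<in> sg_E P. endpt P e False \<notin> X \<and> endpt P e True \<notin> X}"
  "sg_ends (delete_vertices P X) = sg_ends P"
  "sg_pos (delete_vertices P X) = sg_pos P"
  "sg_arr (delete_vertices P X) = sg_arr P"
  by (simp_all add: delete_vertices_def sg_V_def sg_E_def sg_ends_def sg_pos_def sg_arr_def)

lemma endpt_delete_vertices [simp]: "endpt (delete_vertices P X) = endpt P"
  and sign_mult_delete_vertices [simp]: "sign_mult (delete_vertices P X) = sign_mult P"
  by (intro ext; simp add: endpt_def sign_mult_def)+

lemma delete_vertices_empty [simp]: "delete_vertices P {} = P"
  by (cases P) (simp add: delete_vertices_def sg_V_def sg_E_def sg_ends_def sg_pos_def sg_arr_def)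

lemma signed_poset_delete_vertices:
  assumes "signed_poset P"
  shows "signed_poset (delete_vertices P X)"
proof -
  have "is_cycle P vs es" if "is_cycle (delete_vertices P X) vs es" for vs es
    using that unfolding is_cycle_def closed_walk_def by auto
  with assms show ?thesis
    unfolding signed_poset_def oriented_signed_graph_def by auto
qed

text \<open>A half-edge is a pair (e, b), sitting at the vertex endpt P e b. A turn picks, at the
  vertex of each half-edge, a half-edge with the opposite arrow. The turn walk alternately
  turns and crosses the edge of the turned half-edge, so it enters and leaves every vertex it
  passes; once it returns to its start it has traced a cycle.\<close>

definition is_turn :: "sgo \<Rightarrow> (nat \<times> bool \<Rightarrow> nat \<times> bool) \<Rightarrow> bool" where
  "is_turn P t \<longleftrightarrow> (\<forall>h. fst h \<in> sg_E P \<longrightarrow> fst (t h) \<in> sg_E P \<and>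
     endpt P (fst (t h)) (snd (t h)) = endpt P (fst h) (snd h) \<and>
     sg_arr P (fst (t h)) (snd (t h)) = (\<not> sg_arr P (fst h) (snd h)))"

lemma is_turnD:
  assumes "is_turn P t" "fst h \<in> sg_E P"
  shows "fst (t h) \<in> sg_E P" "endpt P (fst (t h)) (snd (t h)) = endpt P (fst h) (snd h)"
    "sg_arr P (fst (t h)) (snd (t h)) = (\<not> sg_arr P (fst h) (snd h))"
  using assms unfolding is_turn_def by blast+

definition turn_walk :: "(nat \<times> bool \<Rightarrow> nat \<times> bool) \<Rightarrow> nat \<times> bool \<Rightarrow> nat \<Rightarrow> nat \<times> bool" where
  "turn_walk t h0 k = ((\<lambda>h. (fst (t h), \<not> snd (t h))) ^^ k) h0"

lemma turn_walk_0 [simp]: "turn_walk t h0 0 = h0"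
  and turn_walk_Suc [simp]:
    "turn_walk t h0 (Suc k) = (fst (t (turn_walk t h0 k)), \<not> snd (t (turn_walk t h0 k)))"
  by (simp_all add: turn_walk_def)

lemma turn_walk_in_sg_E:
  "is_turn P t \<Longrightarrow> fst h0 \<in> sg_E P \<Longrightarrow> fst (turn_walk t h0 k) \<in> sg_E P"
  by (induction k) (simp_all add: is_turnD)

lemma closed_walk_turn_walk:
  assumes t: "is_turn P t" and h0: "fst h0 \<in> sg_E P" and L: "L > 0"
    and period: "turn_walk t h0 L = h0"
  shows "closed_walk P (map (\<lambda>k. endpt P (fst (turn_walk t h0 k)) (snd (turn_walk t h0 k))) [0..<L])
    (map (\<lambda>k. fst (t (turn_walk t h0 k))) [0..<L])" (is "closed_walk P ?vs ?es")
  unfolding closed_walk_def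
proof (intro conjI allI impI)
  fix k assume "k < length ?es"
  then have k: "k < L" by simp
  let ?s = "turn_walk t h0"
  obtain e b where eb: "t (?s k) = (e, b)" by fastforce
  have turned: "e \<in> sg_E P" "endpt P e b = endpt P (fst (?s k)) (snd (?s k))"
    using is_turnD[OF t turn_walk_in_sg_E[OF t h0, of k]] eb by simp_all
  have "?s ((k + 1) mod L) = ?s (Suc k)"
  proof (cases "k + 1 < L")
    case False
    then have "Suc k = L" using k by simp
    then show ?thesis using period by simp
  qed simp
  then have "endpt P e (\<not> b) = endpt P (fst (?s ((k + 1) mod L))) (snd (?s ((k + 1) mod L)))"
    using eb by simp
  then show "{endpt P (?es ! k) False, endpt P (?es ! k) True} =
      {?vs ! k, ?vs ! ((k + 1) mod length ?es)}"
    using k L eb turned(2) by (cases b) auto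
  show "?es ! k \<in> sg_E P"
    using k eb turned(1) by simp
qed (use L in simp_all)

lemma is_cycle_turn_walk:
  assumes t: "is_turn P t" and h0: "fst h0 \<in> sg_E P" and L: "L > 0"
    and period: "turn_walk t h0 L = h0"
  shows "is_cycle P (map (\<lambda>k. endpt P (fst (turn_walk t h0 k)) (snd (turn_walk t h0 k))) [0..<L])
    (map (\<lambda>k. fst (t (turn_walk t h0 k))) [0..<L])" (is "is_cycle P ?vs ?es")
proof -
  let ?s = "turn_walk t h0"
  have "\<exists>e\<in>set ?es. \<exists>b. endpt P e b = v \<and> sg_arr P e b = \<beta>" if "v \<in> set ?vs" for v \<beta>
  proof -
    obtain k where k: "k < L" and v: "v = endpt P (fst (?s k)) (snd (?s k))"
      using \<open>v \<in> set ?vs\<close> by auto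
    obtain k' where k': "k' < L" and prev: "?s k = ?s (Suc k')"
    proof (cases k)
      case 0
      then show thesis using L period by (intro that[of "L - 1"]) simp_all
    next
      case (Suc j)
      then show thesis using k by (intro that[of j]) simp_all
    qed
    have "fst (?s k) = ?es ! k'"
      using k' prev by simp
    then have in_es: "fst (?s k) \<in> set ?es" "fst (t (?s k)) \<in> set ?es"
      using k k' by (metis length_map length_upt minus_nat.diff_0 nth_mem, simp)
    have turned: "endpt P (fst (t (?s k))) (snd (t (?s k))) = v"
      "sg_arr P (fst (t (?s k))) (snd (t (?s k))) = (\<not> sg_arr P (fst (?s k)) (snd (?s k)))"
      using is_turnD[OF t turn_walk_in_sg_E[OF t h0, of k]] v by simp_all
    show ?thesis
    proof (cases "sg_arr P (fst (?s k)) (snd (?s k)) = \<beta>")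
      case True
      then show ?thesis using in_es(1) v by blast
    next
      case False
      then show ?thesis using in_es(2) turned by (intro bexI[of _ "fst (t (?s k))"]) auto
    qed
  qed
  then show ?thesis
    using closed_walk_turn_walk[OF assms] unfolding is_cycle_def by blast
qed

lemma cycle_if_every_half_edge_turns:
  assumes fin: "finite (sg_E P)" and ne: "sg_E P \<noteq> {}"
    and turns: "\<And>e b. e \<in> sg_E P \<Longrightarrow>
      \<exists>e'\<in>sg_E P. \<exists>b'. endpt P e' b' = endpt P e b \<and> sg_arr P e' b' = (\<not> sg_arr P e b)"
  shows "\<exists>vs es. is_cycle P vs es"
proof -
  have "\<forall>h. \<exists>h'. fst h \<in> sg_E P \<longrightarrow> fst h' \<in> sg_E P \<and>
      endpt P (fst h') (snd h') = endpt P (fst h) (snd h) \<and>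
      sg_arr P (fst h') (snd h') = (\<not> sg_arr P (fst h) (snd h))"
    using turns by fastforce
  then obtain t where t: "is_turn P t"
    unfolding is_turn_def by metis
  define H where "H = sg_E P \<times> (UNIV :: bool set)"
  obtain e0 where e0: "e0 \<in> sg_E P" using ne by blast
  have "finite H" "(\<lambda>h. (fst (t h), \<not> snd (t h))) ` H \<subseteq> H" "(e0, True) \<in> H"
    using fin t e0 by (auto simp: H_def is_turn_def)
  then obtain i L where L: "L > 0" and "turn_walk t (e0, True) (i + L) = turn_walk t (e0, True) i"
    unfolding turn_walk_def by (rule eventually_periodic_funpow)
  then have "turn_walk t (turn_walk t (e0, True) i) L = turn_walk t (e0, True) i"
    by (simp add: turn_walk_def funpow_add add.commute)
  then show ?thesis
    using is_cycle_turn_walk[OF t turn_walk_in_sg_E[OF t] L] e0 by fastforce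
qed

lemma sinks_ne_sources:
  assumes sp: "signed_poset P" and ne: "sg_E P \<noteq> {}"
  shows "sinks P \<noteq> sources P"
proof
  assume eq: "sinks P = sources P"
  have or: "oriented_signed_graph P" using sp by (simp add: signed_poset_def)
  have "\<exists>e'\<in>sg_E P. \<exists>b'. endpt P e' b' = endpt P e b \<and> sg_arr P e' b' = (\<not> sg_arr P e b)"
    if e: "e \<in> sg_E P" for e b
  proof -
    have "\<not> (is_sink P (endpt P e b) \<and> is_source P (endpt P e b))"
      using e unfolding is_sink_def is_source_def by blast
    then have "\<not> is_sink P (endpt P e b) \<and> \<not> is_source P (endpt P e b)"
      using eq endpt_in_sg_V[OF or e] unfolding sinks_def sources_def by blast
    then show ?thesis
      unfolding is_sink_def is_source_def by (cases "sg_arr P e b") auto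
  qed
  then have "\<exists>vs es. is_cycle P vs es"
    using or ne by (intro cycle_if_every_half_edge_turns) (auto simp: oriented_signed_graph_def)
  then show False
    using sp by (simp add: signed_poset_def)
qed

lemma signed_poset_if_arrows_constant:
  assumes "oriented_signed_graph P" and "\<And>e b. e \<in> sg_E P \<Longrightarrow> sg_arr P e b = \<beta>"
  shows "signed_poset P"
proof -
  have "\<not> is_cycle P vs es" for vs es
  proof
    assume cyc: "is_cycle P vs es"
    then have "vs ! 0 \<in> set vs" and es: "set es \<subseteq> sg_E P"
      by (auto simp: is_cycle_def closed_walk_def in_set_conv_nth)
    then obtain e b where "e \<in> set es" "sg_arr P e b = (\<not> \<beta>)"
      using cyc unfolding is_cycle_def by (cases \<beta>) blast+
    then show False using assms(2) es by blast
  qed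
  then show ?thesis using assms(1) by (simp add: signed_poset_def)
qed

section \<open>Bounded colorings\<close>

definition colorings :: "sgo \<Rightarrow> (nat \<Rightarrow> int) set" where
  "colorings P = {\<kappa>. (\<forall>v. v \<notin> sg_V P \<longrightarrow> \<kappa> v = 0) \<and> proper_col P \<kappa> \<and> preserves P \<kappa>}"

definition compatible_at :: "sgo \<Rightarrow> (nat \<Rightarrow> int) \<Rightarrow> nat \<Rightarrow> bool \<Rightarrow> bool" where
  "compatible_at P \<kappa> e b \<longleftrightarrow>
     (if sg_arr P e b then sign_mult P e (\<kappa> (endpt P e (\<not> b))) < \<kappa> (endpt P e b)
      else \<kappa> (endpt P e b) < sign_mult P e (\<kappa> (endpt P e (\<not> b))))"

lemma proper_preserves_iff_compatible:
  "proper_col P \<kappa> \<and> preserves P \<kappa> \<longleftrightarrow> (\<forall>e\<in>sg_E P. \<forall>b. compatible_at P \<kappa> e b)"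
proof -
  have "(\<kappa> (endpt P e False) \<noteq> sign_mult P e (\<kappa> (endpt P e True)) \<and>
        (\<forall>b. sg_arr P e b \<longleftrightarrow> sign_mult P e (\<kappa> (endpt P e (\<not> b))) < \<kappa> (endpt P e b)))
     \<longleftrightarrow> (\<forall>b. compatible_at P \<kappa> e b)" for e
    unfolding compatible_at_def sign_mult_def all_bool_eq by (cases "sg_pos P e") auto
  then show ?thesis
    unfolding proper_col_def preserves_def by blast
qed

lemma colorings_iff:
  "\<kappa> \<in> colorings P \<longleftrightarrow>
     (\<forall>v. v \<notin> sg_V P \<longrightarrow> \<kappa> v = 0) \<and> (\<forall>e\<in>sg_E P. \<forall>b. compatible_at P \<kappa> e b)"
  by (simp add: colorings_def proper_preserves_iff_compatible)

lemma compatible_at_swap: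
  assumes "oriented_signed_graph P" "e \<in> sg_E P"
  shows "compatible_at P \<kappa> e (\<not> b) \<longleftrightarrow> compatible_at P \<kappa> e b"
  using sg_arr_other_side[OF assms, of b]
  unfolding compatible_at_def sign_mult_def by (cases "sg_pos P e") auto

lemma compatible_at_delete_vertices [simp]:
  "compatible_at (delete_vertices P X) = compatible_at P"
  by (simp add: compatible_at_def[abs_def])

definition bounded_colorings :: "sgo \<Rightarrow> int \<Rightarrow> (nat \<Rightarrow> int) set" where
  "bounded_colorings P k = {\<kappa> \<in> colorings P. \<forall>v\<in>sg_V P. \<bar>\<kappa> v\<bar> \<le> k}"

lemma bounded_colorings_iff:
  "\<kappa> \<in> bounded_colorings P k \<longleftrightarrow> (\<forall>v. v \<notin> sg_V P \<longrightarrow> \<kappa> v = 0) \<and>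
     (\<forall>e\<in>sg_E P. \<forall>b. compatible_at P \<kappa> e b) \<and> (\<forall>v\<in>sg_V P. \<bar>\<kappa> v\<bar> \<le> k)"
  by (auto simp: bounded_colorings_def colorings_iff)

lemma finite_bounded_colorings:
  assumes "finite (sg_V P)"
  shows "finite (bounded_colorings P k)"
proof (rule finite_subset)
  show "bounded_colorings P k \<subseteq>
      {\<kappa>. \<forall>v. (v \<in> sg_V P \<longrightarrow> \<kappa> v \<in> {-k..k}) \<and> (v \<notin> sg_V P \<longrightarrow> \<kappa> v = 0)}"
    by (fastforce simp: bounded_colorings_iff abs_le_iff)
  show "finite {\<kappa>. \<forall>v. (v \<in> sg_V P \<longrightarrow> \<kappa> v \<in> {-k..k}) \<and> (v \<notin> sg_V P \<longrightarrow> \<kappa> v = 0)}"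
    using assms by (intro finite_set_of_finite_funs) auto
qed

lemma card_bounded_colorings_0:
  "card (bounded_colorings P 0) = (if sg_E P = {} then 1 else 0)"
proof -
  have "\<kappa> = (\<lambda>_. 0)" if "\<kappa> \<in> bounded_colorings P 0" for \<kappa>
    using that by (fastforce simp: bounded_colorings_iff)
  moreover have "(\<lambda>_. 0) \<in> bounded_colorings P 0 \<longleftrightarrow> sg_E P = {}"
    by (auto simp: bounded_colorings_iff compatible_at_def sign_mult_def)
  ultimately have "bounded_colorings P 0 = (if sg_E P = {} then {\<lambda>_. 0} else {})"
    by auto
  then show ?thesis by simp
qed

definition color_class :: "sgo \<Rightarrow> (nat \<Rightarrow> int) \<Rightarrow> int \<Rightarrow> nat set" where
  "color_class P \<kappa> c = {v \<in> sg_V P. \<kappa> v = c}"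

lemma top_color_class_subset_sinks:
  assumes or: "oriented_signed_graph P" and \<kappa>: "\<kappa> \<in> bounded_colorings P k"
  shows "color_class P \<kappa> k \<subseteq> sinks P"
proof -
  have "sg_arr P e b" if e: "e \<in> sg_E P" and top: "\<kappa> (endpt P e b) = k" for e b
  proof -
    have "\<bar>\<kappa> (endpt P e (\<not> b))\<bar> \<le> k"
      using \<kappa> endpt_in_sg_V[OF or e] by (auto simp: bounded_colorings_iff)
    then have "sign_mult P e (\<kappa> (endpt P e (\<not> b))) \<le> k"
      by (auto simp: sign_mult_def)
    moreover have "compatible_at P \<kappa> e b"
      using \<kappa> e by (simp add: bounded_colorings_iff)
    ultimately show ?thesis
      using top by (auto simp: compatible_at_def split: if_splits)
  qed
  then show ?thesis
    by (auto simp: color_class_def sinks_def is_sink_def)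
qed

lemma bottom_color_class_subset_sources:
  assumes or: "oriented_signed_graph P" and \<kappa>: "\<kappa> \<in> bounded_colorings P k"
  shows "color_class P \<kappa> (- k) \<subseteq> sources P"
proof -
  have "\<not> sg_arr P e b" if e: "e \<in> sg_E P" and bottom: "\<kappa> (endpt P e b) = - k" for e b
  proof -
    have "\<bar>\<kappa> (endpt P e (\<not> b))\<bar> \<le> k"
      using \<kappa> endpt_in_sg_V[OF or e] by (auto simp: bounded_colorings_iff)
    then have "- k \<le> sign_mult P e (\<kappa> (endpt P e (\<not> b)))"
      by (auto simp: sign_mult_def)
    moreover have "compatible_at P \<kappa> e b"
      using \<kappa> e by (simp add: bounded_colorings_iff)
    ultimately show ?thesis
      using bottom by (auto simp: compatible_at_def split: if_splits)
  qed
  then show ?thesis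
    by (auto simp: color_class_def sources_def is_source_def)
qed

text \<open>Two sinks, or two sources, are never joined by a positive edge, and a sink and a source
  never by a negative one; so the bound k is never attained by \<open>sign_mult P e\<close> at the
  other end of an edge at a vertex of color k or -k.\<close>

lemma compatible_at_extreme:
  assumes or: "oriented_signed_graph P" and e: "e \<in> sg_E P"
    and bound: "\<forall>v\<in>sg_V P. \<bar>\<kappa> v\<bar> \<le> k"
    and top: "color_class P \<kappa> k \<subseteq> sinks P" and bottom: "color_class P \<kappa> (- k) \<subseteq> sources P"
    and extreme: "\<bar>\<kappa> (endpt P e b)\<bar> = k"
  shows "compatible_at P \<kappa> e b"
proof -
  have at_top: "\<kappa> (endpt P e c) = k \<Longrightarrow> sg_arr P e c" for c
    using top endpt_in_sg_V[OF or e, of c] e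
    by (auto simp: color_class_def sinks_def is_sink_def)
  have at_bottom: "\<kappa> (endpt P e c) = - k \<Longrightarrow> \<not> sg_arr P e c" for c
    using bottom endpt_in_sg_V[OF or e, of c] e
    by (auto simp: color_class_def sources_def is_source_def)
  have other: "sg_arr P e (\<not> b) = (if sg_pos P e then \<not> sg_arr P e b else sg_arr P e b)"
    by (rule sg_arr_other_side[OF or e])
  have "\<bar>\<kappa> (endpt P e (\<not> b))\<bar> \<le> k"
    using bound endpt_in_sg_V[OF or e] by blast
  then have range: "- k \<le> sign_mult P e (\<kappa> (endpt P e (\<not> b)))"
      "sign_mult P e (\<kappa> (endpt P e (\<not> b))) \<le> k"
    by (auto simp: sign_mult_def)
  consider "\<kappa> (endpt P e b) = k" | "\<kappa> (endpt P e b) = - k"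
    using extreme by linarith
  then show ?thesis
  proof cases
    case 1
    with at_top have "sg_arr P e b" .
    moreover have "sign_mult P e (\<kappa> (endpt P e (\<not> b))) \<noteq> k"
      using at_top[of "\<not> b"] at_bottom[of "\<not> b"] other \<open>sg_arr P e b\<close>
      by (auto simp: sign_mult_def split: if_splits)
    ultimately show ?thesis
      using 1 range by (simp add: compatible_at_def)
  next
    case 2
    with at_bottom have "\<not> sg_arr P e b" .
    moreover have "sign_mult P e (\<kappa> (endpt P e (\<not> b))) \<noteq> - k"
      using at_top[of "\<not> b"] at_bottom[of "\<not> b"] other \<open>\<not> sg_arr P e b\<close>
      by (auto simp: sign_mult_def split: if_splits)
    ultimately show ?thesis
      using 2 range by (simp add: compatible_at_def)
  qed
qed

section \<open>Peeling off the extreme colors\<close>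

definition sink_source_pairs :: "sgo \<Rightarrow> (nat set \<times> nat set) set" where
  "sink_source_pairs P = Sigma (Pow (sinks P)) (\<lambda>A. Pow (sources P - A))"

lemma sink_source_pairs_iff:
  "(A, B) \<in> sink_source_pairs P \<longleftrightarrow> A \<subseteq> sinks P \<and> B \<subseteq> sources P \<and> A \<inter> B = {}"
  by (auto simp: sink_source_pairs_def)

lemma finite_sink_source_pairs:
  "oriented_signed_graph P \<Longrightarrow> finite (sink_source_pairs P)"
  by (simp add: sink_source_pairs_def finite_sinks finite_sources)

lemma card_delete_sink_source_pair:
  assumes or: "oriented_signed_graph P" and AB: "(A, B) \<in> sink_source_pairs P"
  shows "card (sg_V P - (A \<union> B)) = card (sg_V P) - (card A + card B)"
    and "card A + card B \<le> card (sg_V P)"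
proof -
  have "A \<subseteq> sg_V P" "B \<subseteq> sg_V P" "A \<inter> B = {}"
    using AB by (auto simp: sink_source_pairs_iff sinks_def sources_def)
  moreover note finite_sg_V[OF or]
  ultimately have "finite A" "finite B" "card (A \<union> B) = card A + card B" "A \<union> B \<subseteq> sg_V P"
    by (auto intro: finite_subset card_Un_disjoint)
  then show "card (sg_V P - (A \<union> B)) = card (sg_V P) - (card A + card B)"
    and "card A + card B \<le> card (sg_V P)"
    using finite_sg_V[OF or] by (simp_all add: card_Diff_subset card_mono flip: \<open>card (A \<union> B) = _\<close>)
qed

lemma restrict_bounded_coloring:
  assumes \<kappa>: "\<kappa> \<in> bounded_colorings P (k + 1)"
    and X: "X = color_class P \<kappa> (k + 1) \<union> color_class P \<kappa> (- (k + 1))"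
  shows "(\<lambda>v. if v \<in> X then 0 else \<kappa> v) \<in> bounded_colorings (delete_vertices P X) k"
proof -
  let ?r = "\<lambda>v. if v \<in> X then 0 else \<kappa> v"
  have "compatible_at (delete_vertices P X) ?r e b" if e: "e \<in> sg_E (delete_vertices P X)" for e b
  proof -
    have "compatible_at P \<kappa> e b"
      using \<kappa> e by (simp add: bounded_colorings_iff)
    moreover have "endpt P e b \<notin> X" "endpt P e (\<not> b) \<notin> X"
      using e by (cases b; simp)+
    ultimately show ?thesis
      by (simp add: compatible_at_def)
  qed
  moreover have "\<bar>?r v\<bar> \<le> k" if "v \<in> sg_V (delete_vertices P X)" for v
    using that \<kappa> X by (fastforce simp: bounded_colorings_iff color_class_def)
  ultimately show ?thesis
    using \<kappa> by (simp add: bounded_colorings_iff)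
qed

lemma extend_bounded_coloring:
  fixes k :: int
  assumes or: "oriented_signed_graph P" and AB: "(A, B) \<in> sink_source_pairs P" and k: "0 \<le> k"
    and \<kappa>: "\<kappa> \<in> bounded_colorings (delete_vertices P (A \<union> B)) k"
  defines "\<kappa>' \<equiv> \<lambda>v. if v \<in> A then k + 1 else if v \<in> B then - (k + 1) else \<kappa> v"
  shows "\<kappa>' \<in> bounded_colorings P (k + 1)"
    and "color_class P \<kappa>' (k + 1) = A" and "color_class P \<kappa>' (- (k + 1)) = B"
proof -
  have A: "A \<subseteq> sinks P" and B: "B \<subseteq> sources P" and disj: "A \<inter> B = {}"
    using AB by (simp_all add: sink_source_pairs_iff)
  then have AV: "A \<subseteq> sg_V P" and BV: "B \<subseteq> sg_V P"
    by (auto simp: sinks_def sources_def)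
  have inner: "\<bar>\<kappa> v\<bar> \<le> k" if "v \<in> sg_V P" "v \<notin> A" "v \<notin> B" for v
    using that \<kappa> by (simp add: bounded_colorings_iff)
  show top: "color_class P \<kappa>' (k + 1) = A"
    using AV k inner by (force simp: color_class_def \<kappa>'_def)
  show bottom: "color_class P \<kappa>' (- (k + 1)) = B"
    using BV disj k inner by (force simp: color_class_def \<kappa>'_def)
  have bound: "\<forall>v\<in>sg_V P. \<bar>\<kappa>' v\<bar> \<le> k + 1"
    using inner k by (force simp: \<kappa>'_def)
  have "compatible_at P \<kappa>' e c" if e: "e \<in> sg_E P" for e c
  proof (cases "endpt P e c \<in> A \<union> B \<or> endpt P e (\<not> c) \<in> A \<union> B")
    case True
    have "compatible_at P \<kappa>' e b" if "endpt P e b \<in> A \<union> B" for b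
      using that k A B top bottom
      by (intro compatible_at_extreme[OF or e bound]) (auto simp: \<kappa>'_def)
    then show ?thesis
      using True compatible_at_swap[OF or e] by blast
  next
    case False
    then have "e \<in> sg_E (delete_vertices P (A \<union> B))"
      using e by (cases c) auto
    then have "compatible_at P \<kappa> e c"
      using \<kappa> by (simp add: bounded_colorings_iff)
    then show ?thesis
      using False by (simp add: compatible_at_def \<kappa>'_def)
  qed
  moreover have "\<kappa>' v = 0" if "v \<notin> sg_V P" for v
    using that AV BV \<kappa> by (auto simp: \<kappa>'_def bounded_colorings_iff)
  ultimately show "\<kappa>' \<in> bounded_colorings P (k + 1)"
    using bound by (simp add: bounded_colorings_iff)
qed

lemma card_bounded_colorings_with_extreme_classes:
  fixes k :: int
  assumes or: "oriented_signed_graph P" and AB: "(A, B) \<in> sink_source_pairs P" and k: "0 \<le> k"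
  shows "card {\<kappa> \<in> bounded_colorings P (k + 1).
             color_class P \<kappa> (k + 1) = A \<and> color_class P \<kappa> (- (k + 1)) = B} =
         card (bounded_colorings (delete_vertices P (A \<union> B)) k)"
    (is "card ?S = card ?D")
proof -
  define restrict where "restrict = (\<lambda>\<kappa> :: nat \<Rightarrow> int. \<lambda>v. if v \<in> A \<union> B then 0 else \<kappa> v)"
  define extend where
    "extend = (\<lambda>\<kappa> :: nat \<Rightarrow> int. \<lambda>v. if v \<in> A then k + 1 else if v \<in> B then - (k + 1) else \<kappa> v)"
  have "bij_betw restrict ?S ?D"
  proof (rule bij_betw_byWitness[where f' = extend])
    show "\<forall>\<kappa>\<in>?S. extend (restrict \<kappa>) = \<kappa>"
      by (auto simp: extend_def restrict_def color_class_def)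
    show "\<forall>\<kappa>\<in>?D. restrict (extend \<kappa>) = \<kappa>"
      by (auto simp: extend_def restrict_def bounded_colorings_iff)
    show "restrict ` ?S \<subseteq> ?D"
      using restrict_bounded_coloring unfolding restrict_def by fastforce
    show "extend ` ?D \<subseteq> ?S"
      using extend_bounded_coloring[OF or AB k] unfolding extend_def by blast
  qed
  then show ?thesis
    by (rule bij_betw_same_card)
qed

definition weighted_colorings :: "sgo \<Rightarrow> int \<Rightarrow> rat \<Rightarrow> rat \<Rightarrow> rat" where
  "weighted_colorings P k a b =
     (\<Sum>\<kappa>\<in>bounded_colorings P k. a ^ card (color_class P \<kappa> k) * b ^ card (color_class P \<kappa> (- k)))"

lemma weighted_colorings_peel:
  fixes k :: int
  assumes or: "oriented_signed_graph P" and k: "0 \<le> k"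
  shows "weighted_colorings P (k + 1) a b = (\<Sum>(A, B)\<in>sink_source_pairs P.
           a ^ card A * b ^ card B * of_nat (card (bounded_colorings (delete_vertices P (A \<union> B)) k)))"
proof -
  define classes where
    "classes = (\<lambda>\<kappa>. (color_class P \<kappa> (k + 1), color_class P \<kappa> (- (k + 1))))"
  have classes_in: "classes ` bounded_colorings P (k + 1) \<subseteq> sink_source_pairs P"
    using top_color_class_subset_sinks[OF or] bottom_color_class_subset_sources[OF or] k
    by (fastforce simp: classes_def sink_source_pairs_iff color_class_def)
  have "weighted_colorings P (k + 1) a b =
      (\<Sum>\<kappa>\<in>bounded_colorings P (k + 1). a ^ card (fst (classes \<kappa>)) * b ^ card (snd (classes \<kappa>)))"
    by (simp add: weighted_colorings_def classes_def)
  also have "\<dots> = (\<Sum>p\<in>sink_source_pairs P. \<Sum>\<kappa>\<in>{\<kappa> \<in> bounded_colorings P (k + 1). classes \<kappa> = p}.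
         a ^ card (fst (classes \<kappa>)) * b ^ card (snd (classes \<kappa>)))"
    by (rule sum.group[symmetric])
      (use classes_in finite_bounded_colorings finite_sg_V[OF or] finite_sink_source_pairs[OF or] in auto)
  also have "\<dots> = (\<Sum>p\<in>sink_source_pairs P.
      of_nat (card {\<kappa> \<in> bounded_colorings P (k + 1). classes \<kappa> = p}) * (a ^ card (fst p) * b ^ card (snd p)))"
    by (intro sum.cong refl) simp
  also have "\<dots> = (\<Sum>(A, B)\<in>sink_source_pairs P.
      a ^ card A * b ^ card B * of_nat (card (bounded_colorings (delete_vertices P (A \<union> B)) k)))"
    using card_bounded_colorings_with_extreme_classes[OF or _ k]
    by (intro sum.cong refl) (auto simp: classes_def)
  finally show ?thesis .
qed

section \<open>The peeling recursion and polynomiality\<close>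

text \<open>chrom P (Suc k) counts the colorings of P with values in {-k..k}. This count is a
  polynomial in k, and chrom P 0 is postulated to be its value at k = -1; lemma
  chrom_Suc_eq_peel_sum at j = 0 is the reciprocity statement that justifies it.\<close>

fun chrom :: "sgo \<Rightarrow> nat \<Rightarrow> rat" where
  "chrom P 0 = (- 1) ^ card (sg_V P)"
| "chrom P (Suc k) = of_nat (card (bounded_colorings P (int k)))"

definition peel_sum :: "sgo \<Rightarrow> rat \<Rightarrow> rat \<Rightarrow> nat \<Rightarrow> rat" where
  "peel_sum P a b j = (\<Sum>(A, B)\<in>sink_source_pairs P.
     a ^ card A * b ^ card B * chrom (delete_vertices P (A \<union> B)) j)"

lemma peel_sum_as_linear_combination:
  "peel_sum P a b = (\<lambda>j. \<Sum>p\<in>sink_source_pairs P.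
     (a ^ card (fst p) * b ^ card (snd p)) * chrom (delete_vertices P (fst p \<union> snd p)) j)"
  by (simp add: peel_sum_def[abs_def] case_prod_beta)

lemma weighted_colorings_eq_peel_sum:
  "oriented_signed_graph P \<Longrightarrow> weighted_colorings P (int k + 1) a b = peel_sum P a b (Suc k)"
  by (simp add: weighted_colorings_peel peel_sum_def)

lemma peel_sum_0:
  assumes or: "oriented_signed_graph P"
  shows "peel_sum P a b 0 =
    (- 1) ^ card (sg_V P) * (\<Sum>(A, B)\<in>sink_source_pairs P. (- a) ^ card A * (- b) ^ card B)"
proof -
  have "a ^ card A * b ^ card B * (- 1) ^ (card (sg_V P) - (card A + card B)) =
      (- 1) ^ card (sg_V P) * ((- a) ^ card A * (- b) ^ card B)"
    if "(A, B) \<in> sink_source_pairs P" for A B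
  proof -
    have "(- 1 :: rat) ^ (card (sg_V P) - (card A + card B)) =
        (- 1) ^ card (sg_V P) * ((- 1) ^ card A * (- 1) ^ card B)"
      using card_delete_sink_source_pair(2)[OF or that]
      by (simp add: neg_one_power_add_eq_neg_one_power_diff[symmetric] power_add)
    then show ?thesis
      by (simp add: power_minus[of a] power_minus[of b] mult_ac)
  qed
  then show ?thesis
    unfolding peel_sum_def sum_distrib_left
    by (intro sum.cong refl) (auto simp: card_delete_sink_source_pair(1)[OF or])
qed

lemma chrom_Suc_eq_peel_sum:
  assumes sp: "signed_poset P"
  shows "chrom P (Suc j) = peel_sum P 1 1 j"
proof (cases j)
  case 0
  have or: "oriented_signed_graph P"
    using sp by (simp add: signed_poset_def)
  have "peel_sum P 1 1 0 = (- 1) ^ card (sg_V P) *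
      (if sinks P = sources P then (- 1) ^ card (sinks P) else 0)"
    by (simp add: peel_sum_0[OF or] sink_source_pairs_def sum_disjoint_pairs_alternating
        finite_sinks[OF or] finite_sources[OF or])
  also have "\<dots> = (if sg_E P = {} then 1 else 0)"
  proof (cases "sg_E P = {}")
    case True
    then have "sinks P = sg_V P" "sources P = sg_V P"
      by (auto simp: sinks_def sources_def is_sink_def is_source_def)
    then show ?thesis using True by (simp flip: power_add)
  qed (use sinks_ne_sources[OF sp] in simp)
  finally show ?thesis
    using 0 by (simp add: card_bounded_colorings_0)
next
  case (Suc k)
  have or: "oriented_signed_graph P"
    using sp by (simp add: signed_poset_def)
  have "chrom P (Suc j) = weighted_colorings P (int k + 1) 1 1"
    using Suc by (simp add: weighted_colorings_def add.commute)
  then show ?thesis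
    using Suc weighted_colorings_eq_peel_sum[OF or] by simp
qed

lemma peel_sum_sinks_at_0:
  assumes or: "oriented_signed_graph P"
  shows "peel_sum P s 0 0 = (- 1) ^ card (sg_V P) * (1 - s) ^ num_sinks P"
proof -
  have "(\<Sum>(A, B)\<in>sink_source_pairs P. (- s) ^ card A * (- 0) ^ card B) =
      (\<Sum>A\<in>Pow (sinks P). (- s) ^ card A * (\<Sum>B\<in>Pow (sources P - A). 0 ^ card B))"
    unfolding sink_source_pairs_def sum_distrib_left
    by (subst sum.Sigma) (simp_all add: finite_sinks[OF or] finite_sources[OF or])
  also have "\<dots> = (\<Sum>A\<in>Pow (sinks P). (- s) ^ card A)"
    using finite_sources[OF or] by (simp add: sum_Pow_power_card)
  also have "\<dots> = (1 - s) ^ num_sinks P"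
    using finite_sinks[OF or] by (simp add: sum_Pow_power_card num_sinks_def sinks_def)
  finally show ?thesis
    by (simp add: peel_sum_0[OF or])
qed

lemma fwd_diff_chrom:
  assumes sp: "signed_poset P"
  shows "fwd_diff (chrom P) = (\<lambda>j. \<Sum>p\<in>sink_source_pairs P - {({}, {})}.
    1 * chrom (delete_vertices P (fst p \<union> snd p)) j)"
proof
  fix j
  have or: "oriented_signed_graph P"
    using sp by (simp add: signed_poset_def)
  have "({}, {}) \<in> sink_source_pairs P"
    by (simp add: sink_source_pairs_def)
  then have "peel_sum P 1 1 j = chrom P j +
      (\<Sum>p\<in>sink_source_pairs P - {({}, {})}. chrom (delete_vertices P (fst p \<union> snd p)) j)"
    by (simp add: peel_sum_as_linear_combination sum.remove finite_sink_source_pairs[OF or])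
  then show "fwd_diff (chrom P) j = (\<Sum>p\<in>sink_source_pairs P - {({}, {})}.
      1 * chrom (delete_vertices P (fst p \<union> snd p)) j)"
    unfolding fwd_diff_def chrom_Suc_eq_peel_sum[OF sp] by simp
qed

lemma card_delete_sink_source_pair_less:
  assumes or: "oriented_signed_graph P" and AB: "(A, B) \<in> sink_source_pairs P"
    and ne: "A \<union> B \<noteq> {}"
  shows "card (sg_V (delete_vertices P (A \<union> B))) < card (sg_V P)"
proof -
  have "finite A" "finite B"
    using AB finite_sinks[OF or] finite_sources[OF or]
    by (auto simp: sink_source_pairs_iff intro: finite_subset)
  then have "0 < card A + card B"
    using ne by auto
  then have "card (sg_V P - (A \<union> B)) < card (sg_V P)"
    using card_delete_sink_source_pair[OF or AB] by linarith
  then show ?thesis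
    by simp
qed

lemma funpow_fwd_diff_chrom:
  "signed_poset P \<Longrightarrow> (fwd_diff ^^ (card (sg_V P) + 1)) (chrom P) = (\<lambda>_. 0)"
proof (induction "card (sg_V P)" arbitrary: P rule: less_induct)
  case less
  let ?n = "card (sg_V P)" and ?R = "sink_source_pairs P - {({}, {})}"
  have "(fwd_diff ^^ ?n) (chrom (delete_vertices P (A \<union> B))) = (\<lambda>_. 0)"
    if "(A, B) \<in> ?R" for A B
  proof -
    have smaller: "card (sg_V (delete_vertices P (A \<union> B))) < ?n"
      using that less.prems
      by (intro card_delete_sink_source_pair_less) (auto simp: signed_poset_def)
    show ?thesis
      by (rule funpow_fwd_diff_vanishes_mono[OF
            less.hyps[OF smaller signed_poset_delete_vertices[OF less.prems]]])
        (use smaller in simp)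
  qed
  then have vanish: "(fwd_diff ^^ ?n) (chrom (delete_vertices P (fst p \<union> snd p))) = (\<lambda>_. 0)"
    if "p \<in> ?R" for p
    using that by (cases p) simp
  have "(fwd_diff ^^ (?n + 1)) (chrom P) = (fwd_diff ^^ ?n) (fwd_diff (chrom P))"
    by (simp add: funpow_Suc_right del: funpow.simps)
  also have "\<dots> = (\<lambda>j. \<Sum>p\<in>?R. 1 * (fwd_diff ^^ ?n) (chrom (delete_vertices P (fst p \<union> snd p))) j)"
    unfolding fwd_diff_chrom[OF less.prems] by (rule funpow_fwd_diff_sum)
  also have "\<dots> = (\<lambda>_. 0)"
    using vanish by simp
  finally show ?case .
qed

lemma funpow_fwd_diff_peel_sum:
  assumes sp: "signed_poset P"
  shows "(fwd_diff ^^ (card (sg_V P) + 1)) (peel_sum P a b) = (\<lambda>_. 0)"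
proof -
  have or: "oriented_signed_graph P"
    using sp by (simp add: signed_poset_def)
  have "(fwd_diff ^^ (card (sg_V P) + 1)) (chrom (delete_vertices P (A \<union> B))) = (\<lambda>_. 0)"
    if "(A, B) \<in> sink_source_pairs P" for A B
    by (rule funpow_fwd_diff_vanishes_mono[OF
          funpow_fwd_diff_chrom[OF signed_poset_delete_vertices[OF sp]]])
      (simp add: card_delete_sink_source_pair(1)[OF or that])
  then show ?thesis
    unfolding peel_sum_as_linear_combination funpow_fwd_diff_sum by (simp add: case_prod_beta)
qed

section \<open>Specialising the series\<close>

text \<open>The degree-n part of the series f, evaluated at x_k = a, x_(-k) = b, x_i = 1 for
  |i| < k and x_i = 0 for |i| > k.\<close>

definition slice_eval :: "nat \<Rightarrow> int \<Rightarrow> rat \<Rightarrow> rat \<Rightarrow> (int multiset \<Rightarrow> rat) \<Rightarrow> rat" where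
  "slice_eval n k a b f =
     (\<Sum>m\<in>multisets_of_size {-k..k} n. f m * (a ^ count m k * b ^ count m (- k)))"

lemma slice_eval_sum:
  "slice_eval n k a b (\<lambda>m. \<Sum>i\<in>I. c i * f i m) = (\<Sum>i\<in>I. c i * slice_eval n k a b (f i))"
  unfolding slice_eval_def sum_distrib_left sum_distrib_right
  by (subst sum.swap) (simp add: mult.assoc)

lemma slice_eval_x0_coeff:
  assumes "1 \<le> k"
  shows "slice_eval n k a b x0_coeff = (if n = 1 then 1 else 0)"
proof -
  have "slice_eval n k a b x0_coeff =
      (\<Sum>m\<in>multisets_of_size {-k..k} n. if m = {#0#} then 1 else 0)"
    unfolding slice_eval_def x0_coeff_def using assms by (intro sum.cong) auto
  also have "\<dots> = (if {#0#} \<in> multisets_of_size {-k..k} n then 1 else 0)"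
    by (simp add: finite_multisets_of_size)
  also have "\<dots> = (if n = 1 then 1 else 0)"
    using assms by (auto simp: multisets_of_size_def)
  finally show ?thesis .
qed

lemma count_image_mset_mset_set:
  "finite V \<Longrightarrow> count (image_mset \<kappa> (mset_set V)) c = card {v \<in> V. \<kappa> v = c}"
  by (simp add: count_image_mset Int_commute vimage_def Collect_conj_eq)

lemma Ycoeff_eq_card_colorings:
  "Ycoeff P m = of_nat (card {\<kappa> \<in> colorings P. image_mset \<kappa> (mset_set (sg_V P)) = m})"
  by (simp add: Ycoeff_def colorings_def)

lemma slice_eval_Ycoeff:
  assumes or: "oriented_signed_graph P"
  shows "slice_eval n k a b (Ycoeff P) =
    (if card (sg_V P) = n then weighted_colorings P k a b else 0)"
proof (cases "card (sg_V P) = n")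
  case True
  have fin: "finite (sg_V P)"
    using or by (rule finite_sg_V)
  define img where "img = (\<lambda>\<kappa> :: nat \<Rightarrow> int. image_mset \<kappa> (mset_set (sg_V P)))"
  define w where "w = (\<lambda>m. a ^ count m k * b ^ count m (- k))"
  let ?M = "multisets_of_size {-k..k} n"
  have fiber: "{\<kappa> \<in> colorings P. img \<kappa> = m} = {\<kappa> \<in> bounded_colorings P k. img \<kappa> = m}"
    if "m \<in> ?M" for m
    using that fin by (force simp: bounded_colorings_def img_def multisets_of_size_def abs_le_iff)
  have img_in: "img \<kappa> \<in> ?M" if "\<kappa> \<in> bounded_colorings P k" for \<kappa>
    using that fin True by (auto simp: multisets_of_size_def img_def bounded_colorings_def abs_le_iff)
  have "slice_eval n k a b (Ycoeff P) = (\<Sum>m\<in>?M. \<Sum>\<kappa>\<in>{\<kappa> \<in> bounded_colorings P k. img \<kappa> = m}. w (img \<kappa>))"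
    unfolding slice_eval_def Ycoeff_eq_card_colorings
    by (intro sum.cong refl) (simp add: fiber[unfolded img_def] w_def img_def)
  also have "\<dots> = (\<Sum>\<kappa>\<in>bounded_colorings P k. w (img \<kappa>))"
    using finite_bounded_colorings[OF fin] img_in by (intro sum.group) auto
  also have "\<dots> = weighted_colorings P k a b"
    by (simp add: weighted_colorings_def w_def img_def count_image_mset_mset_set[OF fin] color_class_def)
  finally show ?thesis
    using True by simp
next
  case False
  then have "Ycoeff P m = 0" if "m \<in> multisets_of_size {-k..k} n" for m
    using that unfolding Ycoeff_def multisets_of_size_def
    by (auto simp: card_eq_0_iff)
  then show ?thesis
    using False by (simp add: slice_eval_def)
qed

lemma sink_polynomial_part_of_size:
  fixes x :: rat
  assumes fin: "finite I" and sp: "\<forall>i\<in>I. signed_poset (Q i)"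
    and rep: "\<forall>m. (\<Sum>i\<in>I. c i * Ycoeff (Q i) m) = x0_coeff m"
  shows "(\<Sum>i | i \<in> I \<and> card (sg_V (Q i)) = n. c i * x ^ num_sinks (Q i)) = - (if n = 1 then 1 else 0)"
proof -
  let ?In = "{i \<in> I. card (sg_V (Q i)) = n}"
  have or: "oriented_signed_graph (Q i)" if "i \<in> I" for i
    using sp that by (simp add: signed_poset_def)
  define h where "h = (\<lambda>j. \<Sum>i\<in>?In. c i * peel_sum (Q i) (1 - x) 0 j)"
  have "(fwd_diff ^^ (n + 1)) (peel_sum (Q i) (1 - x) 0) = (\<lambda>_. 0)" if "i \<in> ?In" for i
    using that sp funpow_fwd_diff_peel_sum[of "Q i"] by auto
  then have "(fwd_diff ^^ (n + 1)) h = (\<lambda>_. 0)"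
    unfolding h_def funpow_fwd_diff_sum by simp
  moreover have "\<forall>j. h (Suc j) = (if n = 1 then 1 else 0)"
  proof
    fix j
    have "h (Suc j) = (\<Sum>i\<in>?In. c i * slice_eval n (int j + 1) (1 - x) 0 (Ycoeff (Q i)))"
      unfolding h_def using or
      by (intro sum.cong refl) (simp add: slice_eval_Ycoeff weighted_colorings_eq_peel_sum)
    also have "\<dots> = (\<Sum>i\<in>I. c i * slice_eval n (int j + 1) (1 - x) 0 (Ycoeff (Q i)))"
      using fin or by (intro sum.mono_neutral_left) (auto simp: slice_eval_Ycoeff)
    also have "\<dots> = slice_eval n (int j + 1) (1 - x) 0 x0_coeff"
      using rep by (simp flip: slice_eval_sum)
    finally show "h (Suc j) = (if n = 1 then 1 else 0)"
      by (simp add: slice_eval_x0_coeff)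
  qed
  ultimately have "h 0 = (if n = 1 then 1 else 0)"
    by (rule funpow_fwd_diff_vanishes_const)
  moreover have "h 0 = (- 1) ^ n * (\<Sum>i\<in>?In. c i * x ^ num_sinks (Q i))"
    unfolding h_def sum_distrib_left using or
    by (intro sum.cong refl) (simp add: peel_sum_sinks_at_0)
  ultimately show ?thesis
    by (cases "n = 1") auto
qed

lemma sink_polynomial_of_x0_representation:
  assumes fin: "finite I" and sp: "\<forall>i\<in>I. signed_poset (Q i)"
    and rep: "\<forall>m. (\<Sum>i\<in>I. c i * Ycoeff (Q i) m) = x0_coeff m"
  shows "(\<Sum>i\<in>I. smult (c i) (monom 1 (num_sinks (Q i)))) = - 1"
proof -
  let ?size = "\<lambda>i. card (sg_V (Q i))"
  have "poly (\<Sum>i\<in>I. smult (c i) (monom 1 (num_sinks (Q i)))) x = - 1" for x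
  proof -
    have "poly (\<Sum>i\<in>I. smult (c i) (monom 1 (num_sinks (Q i)))) x = (\<Sum>i\<in>I. c i * x ^ num_sinks (Q i))"
      by (simp add: poly_sum poly_monom)
    also have "\<dots> = (\<Sum>n\<in>insert 1 (?size ` I). \<Sum>i | i \<in> I \<and> ?size i = n. c i * x ^ num_sinks (Q i))"
      using fin by (intro sum.group[symmetric]) auto
    also have "\<dots> = (\<Sum>n\<in>insert 1 (?size ` I). - (if n = 1 then 1 else 0))"
      using sink_polynomial_part_of_size[OF fin sp rep] by simp
    also have "\<dots> = - 1"
      using fin by (simp add: sum_negf)
    finally show ?thesis .
  qed
  then show ?thesis
    by (simp add: poly_eq_poly_eq_iff[symmetric] fun_eq_iff)
qed

section \<open>A representation of x_0\<close>

lemma Ycoeff_single_vertex: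
  assumes V: "sg_V Q = {0}" and col: "colorings Q = {\<kappa>. (\<forall>v. v \<noteq> 0 \<longrightarrow> \<kappa> v = 0) \<and> C (\<kappa> 0)}"
  shows "Ycoeff Q m = (if \<exists>c. m = {#c#} \<and> C c then 1 else 0)"
proof -
  define pt where "pt = (\<lambda>c :: int. \<lambda>v :: nat. if v = 0 then c else 0)"
  have "{\<kappa> \<in> colorings Q. image_mset \<kappa> (mset_set (sg_V Q)) = m} = pt ` {c. m = {#c#} \<and> C c}"
    by (auto simp: V col pt_def image_iff fun_eq_iff)
  moreover have "inj pt"
    by (auto simp: pt_def inj_def fun_eq_iff)
  moreover have "{c. m = {#c#} \<and> C c} = (if \<exists>c. m = {#c#} \<and> C c then {THE c. m = {#c#}} else {})"
    by auto
  ultimately show ?thesis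
    by (simp add: Ycoeff_eq_card_colorings card_image inj_on_subset)
qed

lemmas sg_components_defs = sg_V_def sg_E_def sg_ends_def sg_pos_def sg_arr_def

definition point :: sgo where
  "point = ({0}, {}, \<lambda>_. (0, 0), \<lambda>_. True, \<lambda>_ _. True)"

text \<open>One vertex with a negative loop whose two arrows both point toward it (inward) or both
  away from it.\<close>

definition looped_point :: "bool \<Rightarrow> sgo" where
  "looped_point inward = ({0}, {0}, \<lambda>_. (0, 0), \<lambda>_. False, \<lambda>_ _. inward)"

lemma signed_poset_point: "signed_poset point"
  by (rule signed_poset_if_arrows_constant[where \<beta> = True])
    (simp_all add: point_def sg_components_defs oriented_signed_graph_def)

lemma signed_poset_looped_point: "signed_poset (looped_point inward)"
  by (rule signed_poset_if_arrows_constant[where \<beta> = inward])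
    (simp_all add: looped_point_def sg_components_defs oriented_signed_graph_def endpt_def)

lemma Ycoeff_point: "Ycoeff point m = (if \<exists>c. m = {#c#} then 1 else 0)"
  by (rule Ycoeff_single_vertex[where C = "\<lambda>_. True", simplified])
    (auto simp: point_def sg_components_defs colorings_def proper_col_def preserves_def)

lemma Ycoeff_looped_point:
  "Ycoeff (looped_point inward) m = (if \<exists>c. m = {#c#} \<and> (if inward then 0 < c else c < 0) then 1 else 0)"
proof (rule Ycoeff_single_vertex)
  show "colorings (looped_point inward) =
      {\<kappa>. (\<forall>v. v \<noteq> 0 \<longrightarrow> \<kappa> v = 0) \<and> (if inward then 0 < \<kappa> 0 else \<kappa> 0 < 0)}"
    by (auto simp: set_eq_iff colorings_iff compatible_at_def looped_point_def sg_components_defs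
        endpt_def sign_mult_def)
qed (simp add: looped_point_def sg_components_defs)

lemma x0_in_span_of_Y:
  "\<exists>(I::nat set) (Q::nat \<Rightarrow> sgo) (c::nat \<Rightarrow> rat). finite I \<and> (\<forall>i\<in>I. signed_poset (Q i)) \<and>
     (\<forall>m. (\<Sum>i\<in>I. c i * Ycoeff (Q i) m) = x0_coeff m)"
proof (intro exI conjI allI)
  let ?Q = "\<lambda>i::nat. if i = 0 then point else looped_point (i = 1)"
  let ?c = "\<lambda>i::nat. if i = 0 then 1 else - 1 :: rat"
  show "finite {0::nat, 1, 2}" by simp
  show "\<forall>i\<in>{0, 1, 2}. signed_poset (?Q i)"
    by (simp add: signed_poset_point signed_poset_looped_point)
  fix m
  show "(\<Sum>i\<in>{0, 1, 2}. ?c i * Ycoeff (?Q i) m) = x0_coeff m"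
    by (cases "\<exists>c. m = {#c#}")
      (auto simp: Ycoeff_point Ycoeff_looped_point x0_coeff_def)
qed

theorem lemma6p8:
  shows "(\<exists>(I::nat set) (Q::nat \<Rightarrow> sgo) (c::nat \<Rightarrow> rat). finite I \<and> (\<forall>i\<in>I. signed_poset (Q i)) \<and>
            (\<forall>m. (\<Sum>i\<in>I. c i * Ycoeff (Q i) m) = x0_coeff m))
       \<and> (\<forall>(I::nat set) (Q::nat \<Rightarrow> sgo) (c::nat \<Rightarrow> rat).
            finite I \<and> (\<forall>i\<in>I. signed_poset (Q i)) \<and>
            (\<forall>m. (\<Sum>i\<in>I. c i * Ycoeff (Q i) m) = x0_coeff m)
            \<longrightarrow> (\<Sum>i\<in>I. smult (c i) (monom 1 (num_sinks (Q i)))) = - 1)"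
  using x0_in_span_of_Y sink_polynomial_of_x0_representation by blast

end
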